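(* Let $I$ be a real interval with $[-1,0]\subseteq I\subseteq\mathbb{R}_-$ and let $f\colon I^n\to\mathbb{R}$ be nonconstant. The following are equivalent: (i) $f$ is a quasi-Lovász extension and there exists $A\subseteq[n]$ with $f_0(-\mathbf{1}_A)\neq0$; (ii) $f$ is comonotonically modular and $f_0$ is weakly homogeneous; (ii') $f$ is invariant under horizontal max-differences and $f_0$ is weakly homogeneous; (iii) there exists a nondecreasing function $\varphi_f\colon I\to\mathbb{R}$ with $\varphi_f(0)=0$ and $\varphi_f(-1)=-1$ such that $f=L^-_f\circ\varphi_f$, i.e. $f(\mathbf{x})=L^-_f(\varphi_f(x_1),\ldots,\varphi_f(x_n))$ for all $\mathbf{x}\in I^n$, where $L^-_f$ denotes the unique Lovász extension $L\colon\mathbb{R}^n\to\mathbb{R}$ satisfying $L(-\mathbf{1}_A)=f(-\mathbf{1}_A)$ for all $A\subseteq[n]$.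
   Context: Notation: $[n]=\{1,\ldots,n\}$; $S_n$ the permutations of $[n]$; $\mathbf{1}_A$ is the indicator tuple of $A\subseteq[n]$, $\mathbf{0}=\mathbf{1}_\varnothing$; for a function $g$, $g_0=g-g(\mathbf{0})$. For $\sigma\in S_n$, $\mathbb{R}^n_\sigma=\{\mathbf{x}: x_{\sigma(1)}\leq\cdots\leq x_{\sigma(n)}\}$, $A^\uparrow_\sigma(i)=\{\sigma(i),\ldots,\sigma(n)\}$, $A^\uparrow_\sigma(n+1)=\varnothing$. The Lovász extension $L_\psi\colon\mathbb{R}^n\to\mathbb{R}$ of $\psi\colon\{0,1\}^n\to\mathbb{R}$ is the function whose restriction to each $\mathbb{R}^n_\sigma$ is the unique affine function agreeing with $\psi$ at the points $\mathbf{1}_{A^\uparrow_\sigma(k)}$, $k\in[n+1]$; a Lovász extension is any such $L_\psi$ (a Lovász extension is uniquely determined by, and can be prescribed arbitrarily through, its values at the points $-\mathbf{1}_A$, $A\subseteq[n]$). A quasi-Lovász extension is $f(\mathbf{x})=L(\varphi(x_1),\ldots,\varphi(x_n))$ with $L$ a Lovász extension and $\varphi\colon I\to\mathbb{R}$ nondecreasing, $\varphi(0)=0$. Comonotonic: $\mathbf{x},\mathbf{x}'\in I^n\cap\mathbb{R}^n_\sigma$ for some $\sigma$. Comonotonically modular: $f(\mathbf{x})+f(\mathbf{x}')=f(\mathbf{x}\wedge\mathbf{x}')+f(\mathbf{x}\vee\mathbf{x}')$ for comonotonic $\mathbf{x},\mathbf{x}'$ ($\wedge,\vee$ componentwise).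 For $c\leq0$, $[\mathbf{x}]^c$ has $i$th component $0$ if $x_i\geq c$ and $x_i$ otherwise, and $\mathbf{x}\vee c$ has components $\max(x_i,c)$; $f$ is invariant under horizontal max-differences if $f(\mathbf{x})-f(\mathbf{x}\vee c)=f([\mathbf{x}]^c)-f([\mathbf{x}]^c\vee c)$ for all $\mathbf{x}\in I^n$, $c\in I$. A function $g\colon I^n\to\mathbb{R}$ ($I\subseteq\mathbb{R}_-$) is weakly homogeneous if there is a nondecreasing $\phi\colon I\to\mathbb{R}$ with $\phi(0)=0$ and $g(x\mathbf{1}_A)=-\phi(x)g(-\mathbf{1}_A)$ for all $x\in I$, $A\subseteq[n]$. *)

theory Defs
  imports "HOL-Analysis.Analysis"
begin

text \<open>Points of R^n are functions 'n => real for a finite index type 'n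
 (n = CARD('n)); subsets A of [n] are sets of type 'n set; a pseudo-Boolean
 function psi on {0,1}^n is represented as a set function psi :: 'n set => real,
 psi(1_A) = psi A.\<close>

definition ind :: "'n set \<Rightarrow> ('n \<Rightarrow> real)" where
  "ind A = (\<lambda>i. if i \<in> A then 1 else 0)"

definition cube :: "real set \<Rightarrow> ('n \<Rightarrow> real) set" where
  "cube I = {x. \<forall>i. x i \<in> I}"

definition is_perm :: "(nat \<Rightarrow> 'n::finite) \<Rightarrow> bool" where
  "is_perm \<sigma> \<longleftrightarrow> bij_betw \<sigma> {1..CARD('n)} UNIV"

definition in_sector :: "(nat \<Rightarrow> 'n::finite) \<Rightarrow> ('n \<Rightarrow> real) \<Rightarrow> bool" where
  "in_sector \<sigma> x \<longleftrightarrow> (\<forall>i j. 1 \<le> i \<longrightarrow> i \<le> j \<longrightarrow> j \<le> CARD('n) \<longrightarrow> x (\<sigma> i) \<le> x (\<sigma> j))"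

definition A_up :: "(nat \<Rightarrow> 'n::finite) \<Rightarrow> nat \<Rightarrow> 'n set" where
  "A_up \<sigma> i = \<sigma> ` {i..CARD('n)}"

definition lovasz_ext_of :: "('n::finite set \<Rightarrow> real) \<Rightarrow> (('n \<Rightarrow> real) \<Rightarrow> real) \<Rightarrow> bool" where
  "lovasz_ext_of \<psi> L \<longleftrightarrow>
     (\<forall>\<sigma>. is_perm \<sigma> \<longrightarrow>
        (\<exists>(c::real) (a::'n \<Rightarrow> real).
           (\<forall>k\<in>{1..CARD('n)+1}. c + (\<Sum>i\<in>UNIV. a i * ind (A_up \<sigma> k) i) = \<psi> (A_up \<sigma> k)) \<and>
           (\<forall>x. in_sector \<sigma> x \<longrightarrow> L x = c + (\<Sum>i\<in>UNIV. a i * x i))))"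

definition is_lovasz :: "(('n::finite \<Rightarrow> real) \<Rightarrow> real) \<Rightarrow> bool" where
  "is_lovasz L \<longleftrightarrow> (\<exists>\<psi>. lovasz_ext_of \<psi> L)"

definition lovasz_minus :: "(('n::finite \<Rightarrow> real) \<Rightarrow> real) \<Rightarrow> (('n \<Rightarrow> real) \<Rightarrow> real)" where
  "lovasz_minus f = (THE L. is_lovasz L \<and> (\<forall>A. L (- ind A) = f (- ind A)))"

definition quasi_lovasz :: "real set \<Rightarrow> (('n::finite \<Rightarrow> real) \<Rightarrow> real) \<Rightarrow> bool" where
  "quasi_lovasz I f \<longleftrightarrow> (\<exists>L \<phi>. is_lovasz L \<and> mono_on I \<phi> \<and> \<phi> 0 = 0 \<and>
      (\<forall>x\<in>cube I. f x = L (\<lambda>i. \<phi> (x i))))"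

definition f0 :: "(('n \<Rightarrow> real) \<Rightarrow> real) \<Rightarrow> (('n \<Rightarrow> real) \<Rightarrow> real)" where
  "f0 f = (\<lambda>x. f x - f (\<lambda>_. 0))"

definition comonotonic :: "real set \<Rightarrow> ('n::finite \<Rightarrow> real) \<Rightarrow> ('n \<Rightarrow> real) \<Rightarrow> bool" where
  "comonotonic I x x' \<longleftrightarrow> x \<in> cube I \<and> x' \<in> cube I \<and>
      (\<exists>\<sigma>. is_perm \<sigma> \<and> in_sector \<sigma> x \<and> in_sector \<sigma> x')"

definition comon_modular :: "real set \<Rightarrow> (('n::finite \<Rightarrow> real) \<Rightarrow> real) \<Rightarrow> bool" where
  "comon_modular I f \<longleftrightarrow> (\<forall>x x'. comonotonic I x x' \<longrightarrow>
      f x + f x' = f (\<lambda>i. min (x i) (x' i)) + f (\<lambda>i. max (x i) (x' i)))"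

definition cutc :: "real \<Rightarrow> ('n \<Rightarrow> real) \<Rightarrow> ('n \<Rightarrow> real)" where
  "cutc c x = (\<lambda>i. if x i \<ge> c then 0 else x i)"

definition maxc :: "('n \<Rightarrow> real) \<Rightarrow> real \<Rightarrow> ('n \<Rightarrow> real)" where
  "maxc x c = (\<lambda>i. max (x i) c)"

definition inv_hmaxdiff :: "real set \<Rightarrow> (('n \<Rightarrow> real) \<Rightarrow> real) \<Rightarrow> bool" where
  "inv_hmaxdiff I f \<longleftrightarrow> (\<forall>x\<in>cube I. \<forall>c\<in>I.
      f x - f (maxc x c) = f (cutc c x) - f (maxc (cutc c x) c))"

definition weakly_homogeneous :: "real set \<Rightarrow> (('n \<Rightarrow> real) \<Rightarrow> real) \<Rightarrow> bool" where
  "weakly_homogeneous I g \<longleftrightarrow> (\<exists>\<phi>. mono_on I \<phi> \<and> \<phi> 0 = 0 \<and>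
      (\<forall>x\<in>I. \<forall>A. g (\<lambda>i. x * ind A i) = - \<phi> x * g (- ind A)))"

end

theory Submission imports Defs begin

(* For a permutation sigma with x in the sector R^n_sigma, write P_k = sigma{1..k}
   for the prefix sets and, for a set function psi,
     sector_sum psi sigma y = sum_{l=1..n} (psi P_l - psi P_{l-1}) * y(sigma l).
   A Lovasz extension satisfies L y = L 0 - sector_sum (B |-> L(-1_B)) sigma y on the
   sector, which yields uniqueness of L^-_f, and Moebius inversion yields existence.
   We say f is represented by phi if, on every sector,
     f y = f 0 - sector_sum (B |-> f_0(-1_B)) sigma (phi o y).
   Then: (a) comonotonic modularity gives invariance under horizontal max-differences;
   (b) that invariance plus a weak-homogeneity witness phi gives the representation,
   by induction on the number of nonzero coordinates (peeling off the largest level);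
   (c) a representation makes f comonotonically modular, and for nonconstant f forces
   phi(-1) = -1 and f = L^-_f o phi, i.e. statement (iii); (d) (iii) gives (i); and
   (e) a quasi-Lovasz extension L o phi is represented by phi / |phi(-1)|, which also
   witnesses weak homogeneity, closing the cycle (i) => (ii) => (iii) => (i). *)

section \<open>Permutations and sectors\<close>

lemma perm_inj: "is_perm (\<sigma>::nat \<Rightarrow> 'n::finite) \<Longrightarrow> inj_on \<sigma> {1..CARD('n)}"
  unfolding is_perm_def bij_betw_def by simp

lemma perm_surj: "is_perm (\<sigma>::nat \<Rightarrow> 'n::finite) \<Longrightarrow> \<sigma> ` {1..CARD('n)} = UNIV"
  unfolding is_perm_def bij_betw_def by simp

lemma perm_preimage:
  assumes "is_perm (\<sigma>::nat \<Rightarrow> 'n::finite)"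
  obtains l where "l \<in> {1..CARD('n)}" "\<sigma> l = i"
  using perm_surj[OF assms] by (metis UNIV_I imageE)

text \<open>Every point lies in some sector: sort its coordinates.\<close>
lemma sorting_perm_exists: "\<exists>\<sigma>. is_perm (\<sigma>::nat \<Rightarrow> 'n::finite) \<and> in_sector \<sigma> x"
proof -
  obtain e where e: "bij_betw e {0..<CARD('n)} (UNIV::'n set)"
    using ex_bij_betw_nat_finite[of "UNIV::'n set"] by auto
  define ys where "ys = sort_key x (map e [0..<CARD('n)])"
  have dys: "distinct ys" and sys: "set ys = UNIV"
    using e unfolding ys_def bij_betw_def by (simp_all add: distinct_map)
  have lys: "length ys = CARD('n)" unfolding ys_def by simp
  have sorted: "sorted (map x ys)" unfolding ys_def by simp
  define \<sigma> where "\<sigma> = (\<lambda>i. ys ! (i - 1))"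
  have b1: "bij_betw ((!) ys) {..<CARD('n)} UNIV"
    by (rule bij_betw_nth[OF dys]) (use lys sys in auto)
  have b2: "bij_betw (\<lambda>i::nat. i - 1) {1..CARD('n)} {..<CARD('n)}"
    by (rule bij_betw_byWitness[where f'="\<lambda>i. i + 1"]) auto
  have "is_perm \<sigma>" unfolding is_perm_def \<sigma>_def
    using bij_betw_trans[OF b2 b1] by (simp add: comp_def)
  moreover have "in_sector \<sigma> x"
    unfolding in_sector_def \<sigma>_def
  proof (intro allI impI)
    fix i j :: nat assume ij: "1 \<le> i" "i \<le> j" "j \<le> CARD('n)"
    then have "map x ys ! (i - 1) \<le> map x ys ! (j - 1)"
      by (intro sorted_nth_mono[OF sorted]) (auto simp: lys)
    then show "x (ys ! (i - 1)) \<le> x (ys ! (j - 1))" using ij lys by simp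
  qed
  ultimately show ?thesis by blast
qed

text \<open>The prefix sets \<open>P_k = \<sigma>{1..k}\<close>: the points \<open>-1_{P_k}\<close>, \<open>k = 0..n\<close>, are the
  vertices of the sector of \<open>\<sigma>\<close> lying in the negative orthant.\<close>
definition prefix_set :: "(nat \<Rightarrow> 'n::finite) \<Rightarrow> nat \<Rightarrow> 'n set" where
  "prefix_set \<sigma> k = \<sigma> ` {1..k}"

lemma perm_mem_image:
  assumes "is_perm (\<sigma>::nat \<Rightarrow> 'n::finite)" "S \<subseteq> {1..CARD('n)}" "l \<in> {1..CARD('n)}"
  shows "\<sigma> l \<in> \<sigma> ` S \<longleftrightarrow> l \<in> S"
  using perm_inj[OF assms(1)] assms(2,3) by (meson inj_on_image_mem_iff)

lemma ind_prefix:
  assumes "is_perm (\<sigma>::nat \<Rightarrow> 'n::finite)" "k \<le> CARD('n)" "l \<in> {1..CARD('n)}"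
  shows "ind (prefix_set \<sigma> k) (\<sigma> l) = (if l \<le> k then 1 else 0)"
  using perm_mem_image[OF assms(1), of "{1..k}" l] assms unfolding ind_def prefix_set_def by auto

lemma prefix_set_0: "prefix_set \<sigma> 0 = {}"
  unfolding prefix_set_def by simp

lemma sector_neg_prefix:
  assumes "is_perm (\<sigma>::nat \<Rightarrow> 'n::finite)" "k \<le> CARD('n)"
  shows "in_sector \<sigma> (- ind (prefix_set \<sigma> k))"
  unfolding in_sector_def using ind_prefix[OF assms] by auto

lemma sector_ind_A_up:
  assumes "is_perm (\<sigma>::nat \<Rightarrow> 'n::finite)" "1 \<le> k"
  shows "in_sector \<sigma> (ind (A_up \<sigma> k))"
  unfolding in_sector_def
proof (intro allI impI)
  fix i j assume h: "1 \<le> i" "i \<le> j" "j \<le> CARD('n)"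
  have "\<sigma> l \<in> A_up \<sigma> k \<longleftrightarrow> k \<le> l" if "l \<in> {1..CARD('n)}" for l
    unfolding A_up_def using perm_mem_image[OF assms(1) _ that, of "{k..CARD('n)}"] assms(2) that by auto
  then show "ind (A_up \<sigma> k) (\<sigma> i) \<le> ind (A_up \<sigma> k) (\<sigma> j)"
    using h unfolding ind_def by auto
qed

lemma sector_indicator_prefix:
  fixes T :: "'n::finite set"
  assumes p: "is_perm \<sigma>" and c: "c < 0" and s: "in_sector \<sigma> (\<lambda>i. c * ind T i)"
  shows "\<exists>k\<le>CARD('n). T = prefix_set \<sigma> k"
proof -
  have down_closed: "\<sigma> i \<in> T" if "1 \<le> i" "i \<le> j" "j \<le> CARD('n)" "\<sigma> j \<in> T" for i j
  proof (rule ccontr)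
    assume "\<sigma> i \<notin> T"
    moreover have "c * ind T (\<sigma> i) \<le> c * ind T (\<sigma> j)" using s that unfolding in_sector_def by blast
    ultimately show False using c that(4) by (simp add: ind_def)
  qed
  define S where "S = {l\<in>{1..CARD('n)}. \<sigma> l \<in> T}"
  define k where "k = (if S = {} then 0 else Max S)"
  have fS: "finite S" unfolding S_def by simp
  have kn: "k \<le> CARD('n)" unfolding k_def using Max_in[OF fS] unfolding S_def by auto
  have "T = prefix_set \<sigma> k"
  proof
    show "T \<subseteq> prefix_set \<sigma> k"
    proof
      fix t assume t: "t \<in> T"
      obtain l where l: "l \<in> {1..CARD('n)}" "\<sigma> l = t" using perm_preimage[OF p] .
      then have "l \<in> S" using t unfolding S_def by auto
      then have "l \<le> k" using fS unfolding k_def by auto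
      then show "t \<in> prefix_set \<sigma> k" using l unfolding prefix_set_def by auto
    qed
    show "prefix_set \<sigma> k \<subseteq> T"
    proof
      fix t assume "t \<in> prefix_set \<sigma> k"
      then obtain l where l: "l \<in> {1..k}" "t = \<sigma> l" unfolding prefix_set_def by auto
      then have "k \<in> S" using Max_in[OF fS] unfolding k_def by (auto split: if_splits)
      then show "t \<in> T" using down_closed[of l k] l unfolding S_def by auto
    qed
  qed
  then show ?thesis using kn by blast
qed

lemma zero_in_sector: "in_sector \<sigma> (\<lambda>_. 0)"
  unfolding in_sector_def by simp

lemma sector_comp:
  assumes "in_sector \<sigma> x" "x \<in> cube I" "mono_on I \<phi>"
  shows "in_sector \<sigma> (\<lambda>i. \<phi> (x i))"
  using assms unfolding in_sector_def cube_def by (auto intro: mono_onD)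

lemma sector_min:
  "in_sector \<sigma> x \<Longrightarrow> in_sector \<sigma> x' \<Longrightarrow> in_sector \<sigma> (\<lambda>i. min (x i) (x' i))"
  unfolding in_sector_def by (metis min.mono)

lemma sector_max:
  "in_sector \<sigma> x \<Longrightarrow> in_sector \<sigma> x' \<Longrightarrow> in_sector \<sigma> (\<lambda>i. max (x i) (x' i))"
  unfolding in_sector_def by (metis max.mono)

lemma sector_maxc: "in_sector \<sigma> x \<Longrightarrow> in_sector \<sigma> (maxc x c)"
  unfolding in_sector_def maxc_def by (metis max.mono order_refl)

lemma sector_cutc:
  assumes "in_sector \<sigma> x" "\<forall>i. x i \<le> 0"
  shows "in_sector \<sigma> (cutc c x)"
  using assms unfolding in_sector_def cutc_def by (smt (verit))

lemma cube_le0: "I \<subseteq> {..0} \<Longrightarrow> x \<in> cube I \<Longrightarrow> x i \<le> 0"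
  unfolding cube_def by auto

lemma cube_maxc: "x \<in> cube I \<Longrightarrow> c \<in> I \<Longrightarrow> maxc x c \<in> cube I"
  unfolding cube_def maxc_def by (auto simp: max_def)

lemma cube_cutc: "x \<in> cube I \<Longrightarrow> 0 \<in> I \<Longrightarrow> cutc c x \<in> cube I"
  unfolding cube_def cutc_def by auto

lemma cube_min: "x \<in> cube I \<Longrightarrow> x' \<in> cube I \<Longrightarrow> (\<lambda>i. min (x i) (x' i)) \<in> cube I"
  unfolding cube_def by (auto simp: min_def)

lemma cube_max: "x \<in> cube I \<Longrightarrow> x' \<in> cube I \<Longrightarrow> (\<lambda>i. max (x i) (x' i)) \<in> cube I"
  unfolding cube_def by (auto simp: max_def)

lemma cube_scaled_ind: "x \<in> I \<Longrightarrow> 0 \<in> I \<Longrightarrow> (\<lambda>i. x * ind A i) \<in> cube I"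
  unfolding cube_def ind_def by auto

definition sector_sum :: "('n::finite set \<Rightarrow> real) \<Rightarrow> (nat \<Rightarrow> 'n) \<Rightarrow> ('n \<Rightarrow> real) \<Rightarrow> real" where
  "sector_sum \<psi> \<sigma> y =
     (\<Sum>l=1..CARD('n). (\<psi> (prefix_set \<sigma> l) - \<psi> (prefix_set \<sigma> (l - 1))) * y (\<sigma> l))"

lemma sector_sum_comb:
  assumes "\<forall>i. y i = u i + v i - w i"
  shows "sector_sum \<psi> \<sigma> y = sector_sum \<psi> \<sigma> u + sector_sum \<psi> \<sigma> v - sector_sum \<psi> \<sigma> w"
  unfolding sector_sum_def assms[rule_format] by (simp add: algebra_simps sum.distrib sum_subtractf)

lemma sector_sum_scale: "sector_sum \<psi> \<sigma> (\<lambda>i. t * y i) = t * sector_sum \<psi> \<sigma> y"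
  unfolding sector_sum_def sum_distrib_left by (rule sum.cong) auto

lemma sector_sum_affine: "sector_sum (\<lambda>B. a * \<psi> B + b) \<sigma> y = a * sector_sum \<psi> \<sigma> y"
  unfolding sector_sum_def sum_distrib_left by (rule sum.cong) (auto simp: algebra_simps)

lemma telescope: "(\<Sum>l=1..(k::nat). F l - F (l - 1)) = F k - (F 0 :: real)"
  by (induction k) (simp_all add: sum.cl_ivl_Suc)

text \<open>On the vertex \<open>t 1_{P_k}\<close> the sector sum telescopes.\<close>
lemma sector_sum_prefix:
  assumes p: "is_perm (\<sigma>::nat \<Rightarrow> 'n::finite)" and k: "k \<le> CARD('n)"
  shows "sector_sum \<psi> \<sigma> (\<lambda>i. t * ind (prefix_set \<sigma> k) i) = t * (\<psi> (prefix_set \<sigma> k) - \<psi> {})"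
proof -
  define d where "d l = t * (\<psi> (prefix_set \<sigma> l) - \<psi> (prefix_set \<sigma> (l - 1)))" for l
  have "sector_sum \<psi> \<sigma> (\<lambda>i. t * ind (prefix_set \<sigma> k) i)
      = (\<Sum>l\<in>{1..CARD('n)}. if l \<in> {1..k} then d l else 0)"
    unfolding sector_sum_def d_def by (rule sum.cong) (use ind_prefix[OF p k] in auto)
  also have "\<dots> = (\<Sum>l\<in>{1..k}. d l)"
    using sum.inter_restrict[of "{1..CARD('n)}" d "{1..k}"] k by (simp add: Int_absorb1)
  also have "\<dots> = t * (\<psi> (prefix_set \<sigma> k) - \<psi> {})"
    using telescope[of "\<lambda>l. \<psi> (prefix_set \<sigma> l)" k]
    unfolding d_def by (simp add: sum_distrib_left[symmetric] prefix_set_0)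
  finally show ?thesis .
qed


section \<open>Lovasz extensions\<close>

text \<open>Affinity on every sector; the interpolation conditions in the definition of a
  Lovasz extension merely name the set function, so this is all that matters.\<close>
definition sector_affine :: "(('n::finite \<Rightarrow> real) \<Rightarrow> real) \<Rightarrow> bool" where
  "sector_affine L \<longleftrightarrow> (\<forall>\<sigma>. is_perm \<sigma> \<longrightarrow>
     (\<exists>(c::real) (a::'n \<Rightarrow> real). \<forall>x. in_sector \<sigma> x \<longrightarrow> L x = c + (\<Sum>i\<in>UNIV. a i * x i)))"

lemma is_lovasz_iff_sector_affine: "is_lovasz L \<longleftrightarrow> sector_affine L"
proof
  assume "is_lovasz L" then show "sector_affine L"
    unfolding is_lovasz_def lovasz_ext_of_def sector_affine_def by meson
next
  assume sa: "sector_affine L"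
  have "lovasz_ext_of (\<lambda>B. L (ind B)) L"
    unfolding lovasz_ext_of_def
  proof (intro allI impI)
    fix \<sigma> :: "nat \<Rightarrow> 'a" assume p: "is_perm \<sigma>"
    then obtain c a where ca: "\<forall>x. in_sector \<sigma> x \<longrightarrow> L x = c + (\<Sum>i\<in>UNIV. a i * x i)"
      using sa unfolding sector_affine_def by blast
    then show "\<exists>c a. (\<forall>k\<in>{1..CARD('a) + 1}. c + (\<Sum>i\<in>UNIV. a i * ind (A_up \<sigma> k) i) = L (ind (A_up \<sigma> k))) \<and>
             (\<forall>x. in_sector \<sigma> x \<longrightarrow> L x = c + (\<Sum>i\<in>UNIV. a i * x i))"
      using sector_ind_A_up[OF p] by (metis atLeastAtMost_iff)
  qed
  then show "is_lovasz L" unfolding is_lovasz_def by blast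
qed

lemma neg_ind_empty: "- ind {} = (\<lambda>_. 0::real)"
  by (rule ext) (simp add: ind_def)

lemma neg_ind_eq: "(\<lambda>i. (-1) * ind A i) = (- ind A :: 'n \<Rightarrow> real)"
  by (rule ext) simp

lemma sum_scaled_ind: "(\<Sum>i\<in>UNIV. a i * (t * ind B i)) = t * (\<Sum>i\<in>(B::'n::finite set). a i)"
proof -
  have "(\<Sum>i\<in>UNIV. a i * (t * ind B i)) = (\<Sum>i\<in>UNIV. t * (if i \<in> B then a i else 0))"
    by (rule sum.cong) (auto simp: ind_def)
  also have "\<dots> = t * (\<Sum>i\<in>B. a i)"
    using sum.inter_restrict[of UNIV a B] by (simp add: sum_distrib_left[symmetric])
  finally show ?thesis .
qed

lemma sum_neg_ind: "(\<Sum>i\<in>UNIV. a i * (- ind B i)) = - (\<Sum>i\<in>(B::'n::finite set). a i)"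
  using sum_scaled_ind[of a "-1" B] by simp

lemma sector_affine_formula:
  fixes L :: "('n::finite \<Rightarrow> real) \<Rightarrow> real"
  assumes sa: "sector_affine L" and p: "is_perm \<sigma>" and y: "in_sector \<sigma> y"
  shows "L y = L (\<lambda>_. 0) - sector_sum (\<lambda>B. L (- ind B)) \<sigma> y"
proof -
  obtain c a where ca: "\<forall>x. in_sector \<sigma> x \<longrightarrow> L x = c + (\<Sum>i\<in>UNIV. a i * x i)"
    using sa p unfolding sector_affine_def by blast
  have vertex: "L (- ind (prefix_set \<sigma> k)) = c - (\<Sum>l=1..k. a (\<sigma> l))" if "k \<le> CARD('n)" for k
  proof -
    have "L (- ind (prefix_set \<sigma> k)) = c - (\<Sum>i\<in>prefix_set \<sigma> k. a i)"
      using ca sector_neg_prefix[OF p that] sum_neg_ind[of a] by simp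
    also have "(\<Sum>i\<in>prefix_set \<sigma> k. a i) = (\<Sum>l=1..k. a (\<sigma> l))"
      unfolding prefix_set_def
      by (rule sum.reindex_cong[where l=\<sigma>]) (use perm_inj[OF p] that in \<open>auto intro: inj_on_subset\<close>)
    finally show ?thesis .
  qed
  have increment: "L (- ind (prefix_set \<sigma> l)) - L (- ind (prefix_set \<sigma> (l - 1))) = - a (\<sigma> l)"
    if "l \<in> {1..CARD('n)}" for l
    using vertex[of l] vertex[of "l - 1"] that by (cases l) auto
  have "(\<Sum>i\<in>UNIV. a i * y i) = (\<Sum>i\<in>\<sigma> ` {1..CARD('n)}. a i * y i)"
    using perm_surj[OF p] by simp
  also have "\<dots> = (\<Sum>l=1..CARD('n). a (\<sigma> l) * y (\<sigma> l))"
    by (rule sum.reindex_cong[where l=\<sigma>]) (use perm_inj[OF p] in auto)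
  also have "\<dots> = - sector_sum (\<lambda>B. L (- ind B)) \<sigma> y"
    unfolding sector_sum_def sum_negf[symmetric]
  proof (rule sum.cong[OF refl])
    fix l assume "l \<in> {1..CARD('n)}"
    then show "a (\<sigma> l) * y (\<sigma> l) = - ((L (- ind (prefix_set \<sigma> l))
        - L (- ind (prefix_set \<sigma> (l - 1)))) * y (\<sigma> l))"
      using increment[of l] by simp
  qed
  finally show ?thesis using ca y zero_in_sector[of \<sigma>] by simp
qed

text \<open>Composition with a monotone reparametrisation stays in the sector of \<open>x\<close>.\<close>
lemma sector_affine_comp_formula:
  fixes L :: "('n::finite \<Rightarrow> real) \<Rightarrow> real"
  assumes "sector_affine L" "is_perm \<sigma>" "in_sector \<sigma> x" "x \<in> cube I" "mono_on I \<phi>"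
  shows "L (\<lambda>i. \<phi> (x i)) = L (\<lambda>_. 0) - sector_sum (\<lambda>B. L (- ind B)) \<sigma> (\<lambda>i. \<phi> (x i))"
  using sector_affine_formula[OF assms(1,2) sector_comp[OF assms(3-5)]] .

lemma sector_affine_ray:
  fixes L :: "('n::finite \<Rightarrow> real) \<Rightarrow> real"
  assumes sa: "sector_affine L" and t: "t \<le> 0"
  shows "L (\<lambda>i. t * ind A i) = L (\<lambda>_. 0) - t * (L (- ind A) - L (\<lambda>_. 0))"
proof -
  obtain \<sigma> where p: "is_perm \<sigma>" and s: "in_sector \<sigma> (- ind A)"
    using sorting_perm_exists by blast
  obtain c a where ca: "\<forall>x. in_sector \<sigma> x \<longrightarrow> L x = c + (\<Sum>i\<in>UNIV. a i * x i)"
    using sa p unfolding sector_affine_def by blast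
  have "in_sector \<sigma> (\<lambda>i. t * ind A i)"
    unfolding in_sector_def
  proof (intro allI impI)
    fix i j assume "1 \<le> i" "i \<le> j" "j \<le> CARD('n)"
    then have "(- t) * (- ind A (\<sigma> i)) \<le> (- t) * (- ind A (\<sigma> j))"
      using s t unfolding in_sector_def by (intro mult_left_mono) auto
    then show "t * ind A (\<sigma> i) \<le> t * ind A (\<sigma> j)" by simp
  qed
  then have "L (\<lambda>i. t * ind A i) = c + t * (\<Sum>i\<in>A. a i)" using ca sum_scaled_ind[of a t A] by simp
  moreover have "L (- ind A) = c - (\<Sum>i\<in>A. a i)" using ca s sum_neg_ind[of a A] by simp
  moreover have "L (\<lambda>_. 0) = c" using ca zero_in_sector[of \<sigma>] by simp
  ultimately show ?thesis by simp
qed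

lemma sector_affine_unique:
  fixes L1 L2 :: "('n::finite \<Rightarrow> real) \<Rightarrow> real"
  assumes "sector_affine L1" "sector_affine L2" "\<forall>A. L1 (- ind A) = L2 (- ind A)"
  shows "L1 = L2"
proof
  fix x :: "'n \<Rightarrow> real"
  obtain \<sigma> where p: "is_perm \<sigma>" and s: "in_sector \<sigma> x" using sorting_perm_exists by blast
  have "L1 (\<lambda>_. 0) = L2 (\<lambda>_. 0)" using assms(3)[rule_format, of "{}"] by (simp add: neg_ind_empty)
  then show "L1 x = L2 x"
    using sector_affine_formula[OF assms(1) p s] sector_affine_formula[OF assms(2) p s] assms(3) by simp
qed

lemma mobius_exists:
  fixes h :: "'n::finite set \<Rightarrow> real"
  shows "\<exists>m. \<forall>B. (\<Sum>A\<in>Pow B. m A) = h B"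
proof -
  define G where "G S = (\<Sum>T\<in>Pow S. (-1) ^ card T * h T)" for S
  have "h B = (\<Sum>T\<in>Pow B. (-1) ^ card T * G T)" for B
    by (rule inclusion_exclusion_symmetric[of G h]) (simp_all add: G_def)
  then show ?thesis by metis
qed

lemma max_neg_ind:
  assumes "A \<noteq> {}"
  shows "Max ((- ind B) ` (A::'n::finite set)) = (if A \<subseteq> B then -1 else (0::real))"
proof (cases "A \<subseteq> B")
  case True
  then have "(- ind B) ` A = {-1}" using assms by (auto simp: ind_def)
  then show ?thesis using True by simp
next
  case False
  then obtain i where "i \<in> A" "i \<notin> B" by auto
  then have "Max ((- ind B) ` A) = 0" by (intro Max_eqI) (auto simp: ind_def)
  then show ?thesis using False by simp
qed

lemma max_in_sector:
  fixes x :: "'n::finite \<Rightarrow> real"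
  assumes p: "is_perm \<sigma>" and s: "in_sector \<sigma> x" and A: "A \<noteq> {}"
  shows "Max (x ` A) = x (\<sigma> (Max {l\<in>{1..CARD('n)}. \<sigma> l \<in> A}))"
proof -
  define S where "S = {l\<in>{1..CARD('n)}. \<sigma> l \<in> A}"
  have fS: "finite S" unfolding S_def by simp
  have "S \<noteq> {}"
  proof -
    obtain i where "i \<in> A" using A by auto
    moreover obtain l where "l \<in> {1..CARD('n)}" "\<sigma> l = i" using perm_preimage[OF p] .
    ultimately show ?thesis unfolding S_def by auto
  qed
  then have MS: "Max S \<in> S" using Max_in[OF fS] by blast
  show ?thesis unfolding S_def[symmetric]
  proof (rule Max_eqI)
    show "finite (x ` A)" by simp
    show "x (\<sigma> (Max S)) \<in> x ` A" using MS unfolding S_def by auto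
    fix y assume "y \<in> x ` A"
    then obtain j where j: "j \<in> A" "y = x j" by auto
    obtain l where l: "l \<in> {1..CARD('n)}" "\<sigma> l = j" using perm_preimage[OF p] .
    then have "l \<le> Max S" using fS j unfolding S_def by auto
    moreover have "Max S \<le> CARD('n)" using MS unfolding S_def by auto
    ultimately show "y \<le> x (\<sigma> (Max S))" using s l j unfolding in_sector_def by auto
  qed
qed

text \<open>Existence: \<open>L x = g {} + \<Sum>_A m(A) max_{i\<in>A} x_i\<close> with \<open>m\<close> the Moebius transform
  of \<open>B \<mapsto> g {} - g B\<close> prescribes arbitrary values at the points \<open>-1_B\<close>.\<close>
lemma sector_affine_exists:
  fixes g :: "'n::finite set \<Rightarrow> real"
  shows "\<exists>L. sector_affine L \<and> (\<forall>A. L (- ind A) = g A)"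
proof -
  obtain m where m: "\<And>B. (\<Sum>A\<in>Pow B. m A) = g {} - g B"
    using mobius_exists[of "\<lambda>B. g {} - g B"] by blast
  have m0: "m {} = 0" using m[of "{}"] by simp
  define L where "L x = g {} + (\<Sum>A\<in>UNIV. m A * Max (x ` A))" for x :: "'n \<Rightarrow> real"
  have "L (- ind B) = g B" for B
  proof -
    have "(\<Sum>A\<in>UNIV. m A * Max ((- ind B) ` A)) = (\<Sum>A\<in>UNIV. - (if A \<in> Pow B then m A else 0))"
    proof (rule sum.cong[OF refl])
      fix A :: "'n set"
      show "m A * Max ((- ind B) ` A) = - (if A \<in> Pow B then m A else 0)"
        using max_neg_ind[of A B] m0 by (cases "A = {}") auto
    qed
    also have "\<dots> = - (\<Sum>A\<in>Pow B. m A)"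
      using sum.inter_restrict[of UNIV m "Pow B"] by (simp add: sum_negf)
    finally show ?thesis unfolding L_def using m[of B] by simp
  qed
  moreover have "sector_affine L"
    unfolding sector_affine_def
  proof (intro allI impI)
    fix \<sigma> :: "nat \<Rightarrow> 'n" assume p: "is_perm \<sigma>"
    define j where "j A = \<sigma> (Max {l\<in>{1..CARD('n)}. \<sigma> l \<in> A})" for A
    define a where "a i = (\<Sum>A\<in>UNIV. if j A = i then m A else 0)" for i
    have "L x = g {} + (\<Sum>i\<in>UNIV. a i * x i)" if s: "in_sector \<sigma> x" for x
    proof -
      have "(\<Sum>A\<in>UNIV. m A * Max (x ` A)) = (\<Sum>A\<in>UNIV. \<Sum>i\<in>UNIV. (if j A = i then m A else 0) * x i)"
      proof (rule sum.cong[OF refl])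
        fix A :: "'n set"
        have "m A * Max (x ` A) = m A * x (j A)"
          using max_in_sector[OF p s, of A] m0 unfolding j_def by (cases "A = {}") auto
        also have "\<dots> = (\<Sum>i\<in>UNIV. (if j A = i then m A else 0) * x i)"
          by (simp add: if_distrib[of "\<lambda>c. c * x _"] cong: if_cong)
        finally show "m A * Max (x ` A) = (\<Sum>i\<in>UNIV. (if j A = i then m A else 0) * x i)" .
      qed
      also have "\<dots> = (\<Sum>i\<in>UNIV. a i * x i)"
        unfolding a_def sum_distrib_right by (rule sum.swap)
      finally show ?thesis unfolding L_def by simp
    qed
    then show "\<exists>c a. \<forall>x. in_sector \<sigma> x \<longrightarrow> L x = c + (\<Sum>i\<in>UNIV. a i * x i)" by blast
  qed
  ultimately show ?thesis by blast
qed

lemma lovasz_minus_props: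
  fixes f :: "('n::finite \<Rightarrow> real) \<Rightarrow> real"
  shows "sector_affine (lovasz_minus f)" and "\<And>A. lovasz_minus f (- ind A) = f (- ind A)"
proof -
  obtain L where L: "sector_affine L" "\<forall>A. L (- ind A) = f (- ind A)"
    using sector_affine_exists[of "\<lambda>A. f (- ind A)"] by blast
  have "\<exists>!L. is_lovasz L \<and> (\<forall>A. L (- ind A) = f (- ind A))"
  proof (rule ex1I[of _ L])
    show "is_lovasz L \<and> (\<forall>A. L (- ind A) = f (- ind A))"
      using L is_lovasz_iff_sector_affine by blast
    fix L' assume "is_lovasz L' \<and> (\<forall>A. L' (- ind A) = f (- ind A))"
    then show "L' = L" using sector_affine_unique[of L' L] L is_lovasz_iff_sector_affine by metis
  qed
  from theI'[OF this] show "sector_affine (lovasz_minus f)" "\<And>A. lovasz_minus f (- ind A) = f (- ind A)"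
    unfolding lovasz_minus_def is_lovasz_iff_sector_affine by blast+
qed


section \<open>Comonotonic modularity implies invariance under horizontal max-differences\<close>

text \<open>\<open>x \<or> c\<close> and \<open>[x]\<^sup>c\<close> are comonotonic, with meet \<open>x\<close> and join \<open>[x]\<^sup>c \<or> c\<close>.\<close>
lemma comon_modular_imp_inv_hmaxdiff:
  fixes f :: "('n::finite \<Rightarrow> real) \<Rightarrow> real"
  assumes I0: "I \<subseteq> {..0}" "0 \<in> I" and cm: "comon_modular I f"
  shows "inv_hmaxdiff I f"
  unfolding inv_hmaxdiff_def
proof (intro ballI)
  fix x :: "'n \<Rightarrow> real" and c assume x: "x \<in> cube I" and c: "c \<in> I"
  have xl: "\<forall>i. x i \<le> 0" using cube_le0[OF I0(1) x] by blast
  have cl: "c \<le> 0" using c I0 by auto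
  obtain \<sigma> where p: "is_perm \<sigma>" and s: "in_sector \<sigma> x" using sorting_perm_exists by blast
  have "comonotonic I (maxc x c) (cutc c x)"
    unfolding comonotonic_def
    using cube_maxc[OF x c] cube_cutc[OF x I0(2)] p sector_maxc[OF s] sector_cutc[OF s xl] by blast
  then have modular: "f (maxc x c) + f (cutc c x) =
      f (\<lambda>i. min (maxc x c i) (cutc c x i)) + f (\<lambda>i. max (maxc x c i) (cutc c x i))"
    using cm unfolding comon_modular_def by blast
  have "(\<lambda>i. min (maxc x c i) (cutc c x i)) = x"
    and "(\<lambda>i. max (maxc x c i) (cutc c x i)) = maxc (cutc c x) c"
    using xl cl unfolding maxc_def cutc_def by (auto simp: min_def max_def)
  then show "f x - f (maxc x c) = f (cutc c x) - f (maxc (cutc c x) c)" using modular by simp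
qed

section \<open>The sector representation\<close>

definition wh_witness :: "real set \<Rightarrow> (('n \<Rightarrow> real) \<Rightarrow> real) \<Rightarrow> (real \<Rightarrow> real) \<Rightarrow> bool" where
  "wh_witness I f \<phi> \<longleftrightarrow> mono_on I \<phi> \<and> \<phi> 0 = 0 \<and>
      (\<forall>x\<in>I. \<forall>A. f0 f (\<lambda>i. x * ind A i) = - \<phi> x * f0 f (- ind A))"

lemma weakly_homogeneous_iff: "weakly_homogeneous I (f0 f) \<longleftrightarrow> (\<exists>\<phi>. wh_witness I f \<phi>)"
  unfolding weakly_homogeneous_def wh_witness_def by blast

definition sector_repr ::
    "(('n::finite \<Rightarrow> real) \<Rightarrow> real) \<Rightarrow> (real \<Rightarrow> real) \<Rightarrow> (nat \<Rightarrow> 'n) \<Rightarrow> ('n \<Rightarrow> real) \<Rightarrow> real" where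
  "sector_repr f \<phi> \<sigma> y = f (\<lambda>_. 0) - sector_sum (\<lambda>B. f0 f (- ind B)) \<sigma> (\<lambda>i. \<phi> (y i))"

definition represented_by :: "real set \<Rightarrow> (('n::finite \<Rightarrow> real) \<Rightarrow> real) \<Rightarrow> (real \<Rightarrow> real) \<Rightarrow> bool" where
  "represented_by I f \<phi> \<longleftrightarrow>
     (\<forall>\<sigma> y. is_perm \<sigma> \<longrightarrow> y \<in> cube I \<longrightarrow> in_sector \<sigma> y \<longrightarrow> f y = sector_repr f \<phi> \<sigma> y)"

lemma sector_repr_comb:
  assumes "\<forall>i. \<phi> (y i) = \<phi> (u i) + \<phi> (v i) - \<phi> (w i)"
  shows "sector_repr f \<phi> \<sigma> y = sector_repr f \<phi> \<sigma> u + sector_repr f \<phi> \<sigma> v - sector_repr f \<phi> \<sigma> w"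
  unfolding sector_repr_def using sector_sum_comb[OF assms] by simp

lemma repr_at_scaled_indicator:
  fixes f :: "('n::finite \<Rightarrow> real) \<Rightarrow> real"
  assumes w: "wh_witness I f \<phi>" and cI: "c \<in> I" and c: "c < 0" and p: "is_perm \<sigma>"
    and s: "in_sector \<sigma> (\<lambda>i. c * ind T i)"
  shows "f (\<lambda>i. c * ind T i) = sector_repr f \<phi> \<sigma> (\<lambda>i. c * ind T i)"
proof -
  obtain k where k: "k \<le> CARD('n)" and T: "T = prefix_set \<sigma> k"
    using sector_indicator_prefix[OF p c s] by blast
  have phi0: "\<phi> 0 = 0" and hom: "f0 f (\<lambda>i. c * ind T i) = - \<phi> c * f0 f (- ind T)"
    using w cI unfolding wh_witness_def by blast+
  have "(\<lambda>i. \<phi> (c * ind T i)) = (\<lambda>i. \<phi> c * ind T i)"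
    using phi0 by (auto simp: ind_def)
  then have "sector_sum (\<lambda>B. f0 f (- ind B)) \<sigma> (\<lambda>i. \<phi> (c * ind T i)) = \<phi> c * f0 f (- ind T)"
    using sector_sum_prefix[OF p k] T by (simp add: f0_def neg_ind_empty)
  then show ?thesis using hom unfolding sector_repr_def f0_def by simp
qed

text \<open>Invariance under horizontal max-differences plus weak homogeneity yields the
  representation: with \<open>c\<close> the largest nonzero level of \<open>y\<close>, the points \<open>y \<or> c\<close> and
  \<open>[y]\<^sup>c \<or> c\<close> are scaled indicators, and \<open>[y]\<^sup>c\<close> has fewer nonzero coordinates.\<close>
lemma inv_hmaxdiff_imp_represented:
  fixes f :: "('n::finite \<Rightarrow> real) \<Rightarrow> real"
  assumes I0: "I \<subseteq> {..0}" "0 \<in> I" and hm: "inv_hmaxdiff I f" and w: "wh_witness I f \<phi>"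
  shows "represented_by I f \<phi>"
  unfolding represented_by_def
proof (intro allI impI)
  fix \<sigma> :: "nat \<Rightarrow> 'n" and y :: "'n \<Rightarrow> real" assume p: "is_perm \<sigma>"
  show "y \<in> cube I \<Longrightarrow> in_sector \<sigma> y \<Longrightarrow> f y = sector_repr f \<phi> \<sigma> y"
  proof (induction "card {i. y i \<noteq> 0}" arbitrary: y rule: less_induct)
    case less
    have phi0: "\<phi> 0 = 0" using w unfolding wh_witness_def by blast
    have yl: "\<forall>i. y i \<le> 0" using cube_le0[OF I0(1) less.prems(1)] by blast
    define N where "N = {i. y i \<noteq> 0}"
    show ?case
    proof (cases "N = {}")
      case True
      then have "y = (\<lambda>_. 0)" unfolding N_def by auto
      then show ?thesis using phi0 by (simp add: sector_repr_def sector_sum_def)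
    next
      case False
      define c where "c = Max (y ` N)"
      have "c \<in> y ` N" unfolding c_def using False by simp
      then obtain i0 where i0: "i0 \<in> N" "y i0 = c" by auto
      have cI: "c \<in> I" using less.prems(1) i0 unfolding cube_def by auto
      have c0: "c < 0" using i0 yl unfolding N_def by (metis less_eq_real_def mem_Collect_eq)
      have "y i \<le> c" if "i \<in> N" for i unfolding c_def using that by simp
      then have top_level: "maxc y c = (\<lambda>i. c * ind N i)"
        using yl c0 unfolding maxc_def ind_def N_def by (auto simp: max_def)
      have lower_levels: "maxc (cutc c y) c = (\<lambda>i. c * ind {i. y i < c} i)"
        using c0 unfolding maxc_def cutc_def ind_def by (auto simp: max_def)
      have cut_cube: "cutc c y \<in> cube I" using cube_cutc[OF less.prems(1) I0(2)] .
      have cut_sector: "in_sector \<sigma> (cutc c y)" using sector_cutc[OF less.prems(2) yl] .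
      have "{i. cutc c y i \<noteq> 0} \<subset> {i. y i \<noteq> 0}"
        using i0 unfolding cutc_def N_def by auto
      then have "card {i. cutc c y i \<noteq> 0} < card {i. y i \<noteq> 0}"
        by (rule psubset_card_mono[rotated]) simp
      then have IH: "f (cutc c y) = sector_repr f \<phi> \<sigma> (cutc c y)"
        using less.hyps cut_cube cut_sector by blast
      have "f (maxc y c) = sector_repr f \<phi> \<sigma> (maxc y c)"
        using repr_at_scaled_indicator[OF w cI c0 p] sector_maxc[OF less.prems(2), of c] top_level
        by simp
      moreover have "f (maxc (cutc c y) c) = sector_repr f \<phi> \<sigma> (maxc (cutc c y) c)"
        using repr_at_scaled_indicator[OF w cI c0 p] sector_maxc[OF cut_sector, of c] lower_levels
        by simp
      moreover have "f y - f (maxc y c) = f (cutc c y) - f (maxc (cutc c y) c)"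
        using hm less.prems(1) cI unfolding inv_hmaxdiff_def by blast
      moreover have "sector_repr f \<phi> \<sigma> y = sector_repr f \<phi> \<sigma> (maxc y c)
          + sector_repr f \<phi> \<sigma> (cutc c y) - sector_repr f \<phi> \<sigma> (maxc (cutc c y) c)"
        by (rule sector_repr_comb) (use phi0 c0 in \<open>auto simp: maxc_def cutc_def max_def\<close>)
      ultimately show ?thesis using IH by simp
    qed
  qed
qed

text \<open>The representation is additive on comonotonic points, since \<open>\<phi>\<close> commutes with
  min and max coordinatewise.\<close>
lemma represented_imp_comon_modular:
  fixes f :: "('n::finite \<Rightarrow> real) \<Rightarrow> real"
  assumes rep: "represented_by I f \<phi>"
  shows "comon_modular I f"
  unfolding comon_modular_def
proof (intro allI impI)
  fix x x' :: "'n \<Rightarrow> real" assume "comonotonic I x x'"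
  then obtain \<sigma> where x: "x \<in> cube I" and x': "x' \<in> cube I" and p: "is_perm \<sigma>"
    and s: "in_sector \<sigma> x" and s': "in_sector \<sigma> x'" unfolding comonotonic_def by blast
  have "sector_repr f \<phi> \<sigma> x = sector_repr f \<phi> \<sigma> (\<lambda>i. min (x i) (x' i))
      + sector_repr f \<phi> \<sigma> (\<lambda>i. max (x i) (x' i)) - sector_repr f \<phi> \<sigma> x'"
    by (rule sector_repr_comb) (auto simp: min_def max_def)
  then show "f x + f x' = f (\<lambda>i. min (x i) (x' i)) + f (\<lambda>i. max (x i) (x' i))"
    using rep p x x' s s' cube_min[OF x x'] sector_min[OF s s'] cube_max[OF x x'] sector_max[OF s s']
    unfolding represented_by_def by simp
qed

lemma represented_nonconst:
  assumes rep: "represented_by I f \<phi>"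
    and nc: "\<exists>x\<in>cube I. \<exists>y\<in>cube I. f x \<noteq> f y"
  shows "\<exists>A. f0 f (- ind A) \<noteq> 0"
proof (rule ccontr)
  assume "\<not> ?thesis"
  then have "\<forall>A. f0 f (- ind A) = 0" by blast
  then have "f x = f (\<lambda>_. 0)" if "x \<in> cube I" for x
    using rep that sorting_perm_exists[of x]
    unfolding represented_by_def sector_repr_def sector_sum_def by fastforce
  then show False using nc by metis
qed

lemma lovasz_minus_comp_eq_repr:
  fixes f :: "('n::finite \<Rightarrow> real) \<Rightarrow> real" and \<sigma> :: "nat \<Rightarrow> 'n"
  assumes "is_perm \<sigma>" "in_sector \<sigma> x" "x \<in> cube I" "mono_on I \<phi>"
  shows "lovasz_minus f (\<lambda>i. \<phi> (x i)) = sector_repr f \<phi> \<sigma> x"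
proof -
  have L0: "lovasz_minus f (\<lambda>_. 0) = f (\<lambda>_. 0)"
    using lovasz_minus_props(2)[of f "{}"] by (simp add: neg_ind_empty)
  have "sector_sum (\<lambda>B. f0 f (- ind B)) \<sigma> (\<lambda>i. \<phi> (x i))
      = sector_sum (\<lambda>B. 1 * lovasz_minus f (- ind B) + - f (\<lambda>_. 0)) \<sigma> (\<lambda>i. \<phi> (x i))"
    by (simp add: f0_def lovasz_minus_props(2))
  then show ?thesis
    using sector_affine_comp_formula[OF lovasz_minus_props(1) assms] L0
    unfolding sector_repr_def sector_sum_affine by simp
qed

text \<open>(ii) \<open>\<Longrightarrow>\<close> (iii): nonconstancy forces \<open>\<phi>(-1) = -1\<close>, and then the representation
  is exactly \<open>L\<^sup>-_f \<circ> \<phi>\<close>.\<close>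
lemma represented_imp_lovasz_minus_comp:
  fixes f :: "('n::finite \<Rightarrow> real) \<Rightarrow> real"
  assumes I1: "{-1..0} \<subseteq> I" and nc: "\<exists>x\<in>cube I. \<exists>y\<in>cube I. f x \<noteq> f y"
    and w: "wh_witness I f \<phi>" and rep: "represented_by I f \<phi>"
  shows "mono_on I \<phi> \<and> \<phi> 0 = 0 \<and> \<phi> (-1) = -1 \<and>
           (\<forall>x\<in>cube I. f x = lovasz_minus f (\<lambda>i. \<phi> (x i)))"
proof -
  have mono: "mono_on I \<phi>" and phi0: "\<phi> 0 = 0"
    and hom: "\<forall>x\<in>I. \<forall>A. f0 f (\<lambda>i. x * ind A i) = - \<phi> x * f0 f (- ind A)"
    using w unfolding wh_witness_def by blast+
  obtain A where A: "f0 f (- ind A) \<noteq> 0" using represented_nonconst[OF rep nc] by blast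
  have "-1 \<in> I" using I1 by auto
  then have "f0 f (- ind A) = - \<phi> (-1) * f0 f (- ind A)"
    using hom neg_ind_eq[of A] by metis
  then have phi_m1: "\<phi> (-1) = -1" using A
    by (metis mult_cancel_right2 minus_equation_iff)
  have "f x = lovasz_minus f (\<lambda>i. \<phi> (x i))" if x: "x \<in> cube I" for x
  proof -
    obtain \<sigma> where p: "is_perm \<sigma>" and s: "in_sector \<sigma> x" using sorting_perm_exists by blast
    show ?thesis using rep p x s lovasz_minus_comp_eq_repr[OF p s x mono]
      unfolding represented_by_def by simp
  qed
  then show ?thesis using mono phi0 phi_m1 by blast
qed

lemma lovasz_minus_comp_imp_quasi_lovasz:
  fixes f :: "('n::finite \<Rightarrow> real) \<Rightarrow> real"
  assumes nc: "\<exists>x\<in>cube I. \<exists>y\<in>cube I. f x \<noteq> f y"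
    and mono: "mono_on I \<phi>" and phi0: "\<phi> 0 = 0"
    and comp: "\<forall>x\<in>cube I. f x = lovasz_minus f (\<lambda>i. \<phi> (x i))"
  shows "quasi_lovasz I f \<and> (\<exists>A. f0 f (- ind A) \<noteq> 0)"
proof -
  have "quasi_lovasz I f"
    unfolding quasi_lovasz_def
    using lovasz_minus_props(1) is_lovasz_iff_sector_affine mono phi0 comp by blast
  moreover have "represented_by I f \<phi>"
    unfolding represented_by_def
    using comp lovasz_minus_comp_eq_repr[OF _ _ _ mono, where f=f] by simp
  ultimately show ?thesis using represented_nonconst[OF _ nc] by blast
qed

text \<open>(i) \<open>\<Longrightarrow>\<close> (ii): if \<open>f = L \<circ> \<phi>\<close>, then \<open>\<phi>(-1) < 0\<close> and the renormalised
  \<open>\<phi>' = \<phi> / |\<phi>(-1)|\<close> witnesses weak homogeneity and represents \<open>f\<close>.\<close>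
lemma quasi_lovasz_imp_represented:
  fixes f :: "('n::finite \<Rightarrow> real) \<Rightarrow> real"
  assumes I1: "{-1..0} \<subseteq> I" and I0: "I \<subseteq> {..0}"
    and q: "quasi_lovasz I f" and A: "\<exists>A. f0 f (- ind A) \<noteq> 0"
  shows "\<exists>\<phi>. wh_witness I f \<phi> \<and> represented_by I f \<phi>"
proof -
  have z: "0 \<in> I" and m1: "-1 \<in> I" using I1 by auto
  obtain L \<phi> where L: "is_lovasz L" and mono: "mono_on I \<phi>" and phi0: "\<phi> 0 = 0"
    and fL: "\<forall>x\<in>cube I. f x = L (\<lambda>i. \<phi> (x i))"
    using q unfolding quasi_lovasz_def by blast
  have saL: "sector_affine L" using L is_lovasz_iff_sector_affine by blast
  have zero_cube: "(\<lambda>_. 0) \<in> cube I" using z unfolding cube_def by simp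
  have f0L: "f (\<lambda>_. 0) = L (\<lambda>_. 0)" using fL[rule_format, OF zero_cube] phi0 by simp
  have phi_nonpos: "\<phi> x \<le> 0" if "x \<in> I" for x
    using mono_onD[OF mono that z] that I0 phi0 by auto
  have on_ray: "f0 f (\<lambda>i. x * ind A i) = - \<phi> x * (L (- ind A) - L (\<lambda>_. 0))" if x: "x \<in> I" for x A
  proof -
    have "(\<lambda>i. \<phi> (x * ind A i)) = (\<lambda>i. \<phi> x * ind A i)" by (rule ext) (simp add: ind_def phi0)
    then have "f (\<lambda>i. x * ind A i) = L (\<lambda>i. \<phi> x * ind A i)" using fL[rule_format, OF cube_scaled_ind[OF x z]] by simp
    then show ?thesis using sector_affine_ray[OF saL phi_nonpos[OF x], of A] f0L unfolding f0_def by simp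
  qed
  have vertex: "f0 f (- ind A) = - \<phi> (-1) * (L (- ind A) - L (\<lambda>_. 0))" for A
    using on_ray[OF m1, of A] neg_ind_eq[of A] by simp
  have phi_m1: "\<phi> (-1) < 0"
    using A vertex phi_nonpos[OF m1] by (metis less_eq_real_def minus_zero mult_zero_left)
  define \<phi>' where "\<phi>' x = - \<phi> x / \<phi> (-1)" for x
  have "wh_witness I f \<phi>'"
    unfolding wh_witness_def
  proof (intro conjI ballI allI)
    show "mono_on I \<phi>'"
      using mono phi_m1 unfolding \<phi>'_def mono_on_def by (simp add: divide_right_mono_neg)
    show "\<phi>' 0 = 0" unfolding \<phi>'_def phi0 by simp
    fix x A assume "x \<in> I"
    then show "f0 f (\<lambda>i. x * ind A i) = - \<phi>' x * f0 f (- ind A)"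
      unfolding on_ray[OF \<open>x \<in> I\<close>] vertex \<phi>'_def using phi_m1 by (simp add: field_simps)
  qed
  moreover have "represented_by I f \<phi>'"
    unfolding represented_by_def
  proof (intro allI impI)
    fix \<sigma> :: "nat \<Rightarrow> 'n" and y assume p: "is_perm \<sigma>" and y: "y \<in> cube I" and s: "in_sector \<sigma> y"
    have "(\<lambda>i. \<phi> (y i)) = (\<lambda>i. - \<phi> (-1) * \<phi>' (y i))"
      using phi_m1 unfolding \<phi>'_def by auto
    then have "sector_sum (\<lambda>B. L (- ind B)) \<sigma> (\<lambda>i. \<phi> (y i))
        = - \<phi> (-1) * sector_sum (\<lambda>B. L (- ind B)) \<sigma> (\<lambda>i. \<phi>' (y i))"
      by (simp only: sector_sum_scale)
    also have "\<dots> = sector_sum (\<lambda>B. - \<phi> (-1) * L (- ind B) + \<phi> (-1) * L (\<lambda>_. 0)) \<sigma>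
        (\<lambda>i. \<phi>' (y i))"
      by (rule sector_sum_affine[symmetric])
    also have "\<dots> = sector_sum (\<lambda>B. f0 f (- ind B)) \<sigma> (\<lambda>i. \<phi>' (y i))"
      by (simp add: vertex algebra_simps)
    finally show "f y = sector_repr f \<phi>' \<sigma> y"
      using fL y sector_affine_comp_formula[OF saL p s y mono] f0L unfolding sector_repr_def by simp
  qed
  ultimately show ?thesis by blast
qed

theorem theorem16:
  fixes I :: "real set" and f :: "('n::finite \<Rightarrow> real) \<Rightarrow> real"
  assumes "is_interval I" and "{-1..0} \<subseteq> I" and "I \<subseteq> {..0}"
    and "\<exists>x\<in>cube I. \<exists>y\<in>cube I. f x \<noteq> f y"
  shows "((quasi_lovasz I f \<and> (\<exists>A. f0 f (- ind A) \<noteq> 0))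
            \<longleftrightarrow> (comon_modular I f \<and> weakly_homogeneous I (f0 f)))
       \<and> ((comon_modular I f \<and> weakly_homogeneous I (f0 f))
            \<longleftrightarrow> (inv_hmaxdiff I f \<and> weakly_homogeneous I (f0 f)))
       \<and> ((comon_modular I f \<and> weakly_homogeneous I (f0 f))
            \<longleftrightarrow> (\<exists>\<phi>. mono_on I \<phi> \<and> \<phi> 0 = 0 \<and> \<phi> (-1) = -1 \<and>
                   (\<forall>x\<in>cube I. f x = lovasz_minus f (\<lambda>i. \<phi> (x i)))))"
proof -
  have z: "0 \<in> I" using assms(2) by auto
  let ?rep = "\<exists>\<phi>. wh_witness I f \<phi> \<and> represented_by I f \<phi>"
  have ii_ii': "comon_modular I f \<Longrightarrow> inv_hmaxdiff I f"
    using comon_modular_imp_inv_hmaxdiff[OF assms(3) z] .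
  have ii'_rep: "inv_hmaxdiff I f \<and> weakly_homogeneous I (f0 f) \<Longrightarrow> ?rep"
    using inv_hmaxdiff_imp_represented[OF assms(3) z] weakly_homogeneous_iff by blast
  have rep_ii: "?rep \<Longrightarrow> comon_modular I f \<and> weakly_homogeneous I (f0 f)"
    using represented_imp_comon_modular weakly_homogeneous_iff by blast
  have rep_iii: "?rep \<Longrightarrow> \<exists>\<phi>. mono_on I \<phi> \<and> \<phi> 0 = 0 \<and> \<phi> (-1) = -1 \<and>
      (\<forall>x\<in>cube I. f x = lovasz_minus f (\<lambda>i. \<phi> (x i)))"
    using represented_imp_lovasz_minus_comp[OF assms(2,4)] by blast
  have iii_i: "\<exists>\<phi>. mono_on I \<phi> \<and> \<phi> 0 = 0 \<and> \<phi> (-1) = -1 \<and>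
      (\<forall>x\<in>cube I. f x = lovasz_minus f (\<lambda>i. \<phi> (x i))) \<Longrightarrow>
      quasi_lovasz I f \<and> (\<exists>A. f0 f (- ind A) \<noteq> 0)"
    using lovasz_minus_comp_imp_quasi_lovasz[OF assms(4)] by blast
  have i_rep: "quasi_lovasz I f \<and> (\<exists>A. f0 f (- ind A) \<noteq> 0) \<Longrightarrow> ?rep"
    using quasi_lovasz_imp_represented[OF assms(2,3)] by blast
  show ?thesis using ii_ii' ii'_rep rep_ii rep_iii iii_i i_rep by blast
qed

end
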